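(* Let $N=[n(i,j)]$ be an $r\times r$ indecomposable generalised Cartan matrix. There exists an $r\times r$ matrix $A'$ such that (a) $A'_{ii}=1$ for $1\le i\le r$; (b) $A'_{ij}\in\{0,-1\}$ for $i\ne j$; (c) $A'_{ij}+A'_{ji}=n(j,i)$ for all $i,j$; (d) if $A'_{ij}=-1$, then the $i$-th row and the $j$-th column of $A'$ have no other entries equal to $-1$, if and only if $N$ is the generalised Cartan matrix of type $A_r$ ($r\ge1$) or of type $A^{(1)}_{r-1}$ ($r\ge 2$). For $A_1$ or $A^{(1)}_1$ there is exactly one matrix satisfying (a)–(d), and for $A_r$ ($r\ge2$) or $A^{(1)}_{r-1}$ ($r\ge3$) there are exactly two.
   Context: A generalised Cartan matrix is $N=[n(i,j)]_{1\le i,j\le r}$ with $n(i,j)\in\mathbb Z$, $n(i,i)=2$, $n(i,j)\le 0$ for $i\neq j$, and $n(i,j)=0\iff n(j,i)=0$; it is indecomposable if there is no partition of $\{1,\dots,r\}$ into two nonempty sets $I,J$ with $n(i,j)=0$ for all $i\in I,j\in J$. The generalised Cartan matrix of type $A_r$ ($r\ge1$) is the $r\times r$ matrix with $2$ on the diagonal, $-1$ in positions $(i,i\pm1)$ and $0$ elsewhere; that of type $A^{(1)}_1$ is $\begin{pmatrix}2&-2\\-2&2\end{pmatrix}$; that of type $A^{(1)}_{r-1}$ ($r\ge3$) is the $r\times r$ matrix with $2$ on the diagonal, $-1$ in positions $(i,i\pm1)$ and $(1,r),(r,1)$, and $0$ elsewhere. "$N$ is the generalised Cartan matrix of type X" means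 $N$ equals it up to a simultaneous permutation of rows and columns. *)

theory Defs
  imports Main
begin

text \<open>Square integer matrices of size r are functions nat => nat => int,
  indexed by 1..r (entries outside the index range are irrelevant except where
  stated).\<close>

definition gcm :: "nat \<Rightarrow> (nat \<Rightarrow> nat \<Rightarrow> int) \<Rightarrow> bool" where
  "gcm r N \<longleftrightarrow>
     (\<forall>i\<in>{1..r}. N i i = 2) \<and>
     (\<forall>i\<in>{1..r}. \<forall>j\<in>{1..r}. i \<noteq> j \<longrightarrow> N i j \<le> 0) \<and>
     (\<forall>i\<in>{1..r}. \<forall>j\<in>{1..r}. N i j = 0 \<longleftrightarrow> N j i = 0)"

definition indecomposable :: "nat \<Rightarrow> (nat \<Rightarrow> nat \<Rightarrow> int) \<Rightarrow> bool" where
  "indecomposable r N \<longleftrightarrow>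
     \<not> (\<exists>I J. I \<noteq> {} \<and> J \<noteq> {} \<and> I \<inter> J = {} \<and> I \<union> J = {1..r} \<and>
            (\<forall>i\<in>I. \<forall>j\<in>J. N i j = 0))"

definition cartan_A :: "nat \<Rightarrow> nat \<Rightarrow> nat \<Rightarrow> int" where
  "cartan_A r i j = (if i = j then 2 else if i = j + 1 \<or> j = i + 1 then -1 else 0)"

definition cartan_A_aff :: "nat \<Rightarrow> nat \<Rightarrow> nat \<Rightarrow> int" where
  "cartan_A_aff r i j =
     (if r = 2 then (if i = j then 2 else -2)
      else (if i = j then 2
            else if i = j + 1 \<or> j = i + 1 \<or> (i = 1 \<and> j = r) \<or> (i = r \<and> j = 1) then -1
            else 0))"

definition is_type :: "nat \<Rightarrow> (nat \<Rightarrow> nat \<Rightarrow> int) \<Rightarrow> (nat \<Rightarrow> nat \<Rightarrow> int) \<Rightarrow> bool" where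
  "is_type r M N \<longleftrightarrow>
     (\<exists>\<sigma>. bij_betw \<sigma> {1..r} {1..r} \<and>
          (\<forall>i\<in>{1..r}. \<forall>j\<in>{1..r}. N i j = M (\<sigma> i) (\<sigma> j)))"

definition admissible :: "nat \<Rightarrow> (nat \<Rightarrow> nat \<Rightarrow> int) \<Rightarrow> (nat \<Rightarrow> nat \<Rightarrow> int) \<Rightarrow> bool" where
  "admissible r N A \<longleftrightarrow>
     (\<forall>i\<in>{1..r}. A i i = 1) \<and>
     (\<forall>i\<in>{1..r}. \<forall>j\<in>{1..r}. i \<noteq> j \<longrightarrow> A i j \<in> {0, -1}) \<and>
     (\<forall>i\<in>{1..r}. \<forall>j\<in>{1..r}. A i j + A j i = N j i) \<and>
     (\<forall>i\<in>{1..r}. \<forall>j\<in>{1..r}. A i j = -1 \<longrightarrow>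
        (\<forall>k\<in>{1..r}. k \<noteq> j \<longrightarrow> A i k \<noteq> -1) \<and>
        (\<forall>k\<in>{1..r}. k \<noteq> i \<longrightarrow> A k j \<noteq> -1))"

text \<open>The set of r x r matrices satisfying (a)-(d); a matrix is represented
  canonically by requiring entries outside {1..r} x {1..r} to be 0.\<close>
definition admissible_set :: "nat \<Rightarrow> (nat \<Rightarrow> nat \<Rightarrow> int) \<Rightarrow> (nat \<Rightarrow> nat \<Rightarrow> int) set" where
  "admissible_set r N =
     {A. admissible r N A \<and> (\<forall>i j. i \<notin> {1..r} \<or> j \<notin> {1..r} \<longrightarrow> A i j = 0)}"

end

theory Submission
  imports Defs
begin

(* The -1 entries of an admissible matrix A' are the arcs of a digraph on {1..r}: condition (d)
   says that every vertex has at most one outgoing and at most one incoming arc, and (c) says that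
   off the diagonal n(i,j) is minus the number of arcs between i and j. Indecomposability makes
   the digraph connected, and a connected digraph with in- and out-degrees at most one is a
   directed path or a directed cycle, so N is of type A_r or A^(1)_(r-1).
   Conversely, for these two types (c) puts exactly one arc on every edge of the Dynkin diagram,
   and (d) makes all arcs point the same way as the arc between 1 and 2. Hence A' is the path or
   cycle matrix or its transpose, and the two orientations coincide only for A_1 and A^(1)_1. *)

locale partial_injection =
  fixes V :: "'a set" and R :: "'a \<Rightarrow> 'a \<Rightarrow> bool"
  assumes finite_V: "finite V"
    and arc_in_V: "R x y \<Longrightarrow> x \<in> V \<and> y \<in> V"
    and arc_functional: "R x y \<Longrightarrow> R x z \<Longrightarrow> y = z"
    and arc_injective: "R x z \<Longrightarrow> R y z \<Longrightarrow> x = y"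
begin

definition walk :: "nat \<Rightarrow> (nat \<Rightarrow> 'a) \<Rightarrow> bool" where
  "walk n p \<longleftrightarrow> 1 \<le> n \<and> p ` {..<n} \<subseteq> V \<and> inj_on p {..<n} \<and> (\<forall>k. Suc k < n \<longrightarrow> R (p k) (p (Suc k)))"

lemma walk_length_le: "walk n p \<Longrightarrow> n \<le> card V"
  unfolding walk_def using card_inj_on_le[OF _ _ finite_V, of p "{..<n}"] by simp

lemma walk_extend_maximal:
  assumes "walk n p"
  shows "\<exists>m q. walk m q \<and> q 0 = p 0 \<and> (\<forall>y. R (q (m - 1)) y \<longrightarrow> y \<in> q ` {..<m})"
  using assms
proof (induction "card V - n" arbitrary: n p rule: less_induct)
  case less
  show ?case
  proof (cases "\<forall>y. R (p (n - 1)) y \<longrightarrow> y \<in> p ` {..<n}")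
    case True
    then show ?thesis using less.prems by blast
  next
    case False
    then obtain y where y: "R (p (n - 1)) y" "y \<notin> p ` {..<n}" by blast
    have "walk (Suc n) (p(n := y))"
      unfolding walk_def
    proof (intro conjI allI impI)
      show "(p(n := y)) ` {..<Suc n} \<subseteq> V"
        using less.prems arc_in_V[OF y(1)] by (auto simp: walk_def lessThan_Suc)
      show "inj_on (p(n := y)) {..<Suc n}"
        using less.prems y(2) by (auto simp: walk_def lessThan_Suc inj_on_def)
      show "R ((p(n := y)) k) ((p(n := y)) (Suc k))" if "Suc k < Suc n" for k
        using that less.prems y(1) by (cases "Suc k = n") (auto simp: walk_def)
    qed simp
    moreover have "card V - Suc n < card V - n"
      using walk_length_le[OF calculation] by simp
    moreover have "(p(n := y)) 0 = p 0"
      using less.prems by (simp add: walk_def)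
    ultimately show ?thesis using less.hyps by metis
  qed
qed

lemma walk_arc_iff:
  assumes "walk n p" "a < n" "b < n" "0 < b"
  shows "R (p a) (p b) \<longleftrightarrow> b = Suc a"
proof
  assume "R (p a) (p b)"
  moreover have "R (p (b - 1)) (p b)"
    using assms unfolding walk_def by (metis Suc_pred')
  ultimately have "p a = p (b - 1)" by (rule arc_injective)
  then show "b = Suc a"
    using assms unfolding walk_def by (auto dest: inj_onD)
next
  assume "b = Suc a"
  then show "R (p a) (p b)" using assms unfolding walk_def by simp
qed

lemma exists_source_or_total:
  assumes "V \<noteq> {}"
  obtains s where "s \<in> V" "(\<forall>x. \<not> R x s) \<or> (\<forall>x\<in>V. \<exists>y. R x y)"
proof (cases "\<forall>y\<in>V. \<exists>x. R x y")
  case True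
  define pred where "pred y = (SOME x. R x y)" for y
  have pred: "R (pred y) y" if "y \<in> V" for y
    using True that someI_ex unfolding pred_def by metis
  have "pred ` V = V"
  proof (rule endo_inj_surj[OF finite_V])
    show "pred ` V \<subseteq> V" using pred arc_in_V by blast
    show "inj_on pred V" using pred arc_functional by (metis inj_onI)
  qed
  then have "\<forall>x\<in>V. \<exists>y. R x y" using pred by (metis imageE)
  then show ?thesis using that assms by blast
next
  case False
  then show ?thesis using that by blast
qed

lemma maximal_walk_arc_into_start:
  assumes walk: "walk n p" and maximal: "\<And>y. R (p (n - 1)) y \<Longrightarrow> y \<in> p ` {..<n}"
    and source_or_total: "(\<forall>x. \<not> R x (p 0)) \<or> (\<forall>x\<in>V. \<exists>y. R x y)"
  shows "R x (p 0) \<longleftrightarrow> (\<exists>z. R z (p 0)) \<and> x = p (n - 1)"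
proof -
  have "R (p (n - 1)) (p 0)" if in_arc: "R z (p 0)" for z
  proof -
    have "p (n - 1) \<in> V" using walk unfolding walk_def by auto
    then obtain y where y: "R (p (n - 1)) y" using in_arc source_or_total by blast
    then obtain m where "m < n" "y = p m" using maximal by blast
    then show ?thesis using walk_arc_iff[OF walk, of "n - 1" m] y by (cases "m = 0") auto
  qed
  then show ?thesis using arc_injective by blast
qed

lemma maximal_walk_spans:
  assumes walk: "walk n p" and maximal: "\<And>y. R (p (n - 1)) y \<Longrightarrow> y \<in> p ` {..<n}"
    and source_or_total: "(\<forall>x. \<not> R x (p 0)) \<or> (\<forall>x\<in>V. \<exists>y. R x y)"
    and connected: "\<And>P. P \<subseteq> V \<Longrightarrow> P \<noteq> {} \<Longrightarrow> (\<forall>x\<in>P. \<forall>y. R x y \<or> R y x \<longrightarrow> y \<in> P) \<Longrightarrow> P = V"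
  shows "p ` {..<n} = V"
proof (rule connected)
  have "1 \<le> n" and step: "\<And>k. Suc k < n \<Longrightarrow> R (p k) (p (Suc k))"
    using walk unfolding walk_def by auto
  show "\<forall>x\<in>p ` {..<n}. \<forall>y. R x y \<or> R y x \<longrightarrow> y \<in> p ` {..<n}"
  proof (intro ballI allI impI)
    fix x y assume "x \<in> p ` {..<n}" and "R x y \<or> R y x"
    then obtain k where "k < n" "x = p k" by blast
    consider "R x y" "Suc k < n" | "R x y" "k = n - 1" | "R y x" "k = 0" | "R y x" "0 < k"
      using \<open>R x y \<or> R y x\<close> \<open>k < n\<close> by force
    then show "y \<in> p ` {..<n}"
    proof cases
      case 1
      then have "y = p (Suc k)" using step arc_functional \<open>x = p k\<close> by metis
      then show ?thesis using \<open>Suc k < n\<close> by blast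
    next
      case 2
      then show ?thesis using maximal \<open>x = p k\<close> by blast
    next
      case 3
      then have "y = p (n - 1)"
        using maximal_walk_arc_into_start[OF walk maximal source_or_total] \<open>x = p k\<close> by blast
      then show ?thesis using \<open>1 \<le> n\<close> by simp
    next
      case 4
      then have "R (p (k - 1)) x" using step[of "k - 1"] \<open>k < n\<close> \<open>x = p k\<close> by simp
      then have "y = p (k - 1)" using 4 arc_injective by blast
      then show ?thesis using \<open>k < n\<close> by simp
    qed
  qed
qed (use walk in \<open>auto simp: walk_def lessThan_empty_iff\<close>)

lemma connected_path_or_cycle:
  assumes "V \<noteq> {}" and irreflexive: "\<And>x. \<not> R x x"
    and connected: "\<And>P. P \<subseteq> V \<Longrightarrow> P \<noteq> {} \<Longrightarrow> (\<forall>x\<in>P. \<forall>y. R x y \<or> R y x \<longrightarrow> y \<in> P) \<Longrightarrow> P = V"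
  obtains p cyc where "bij_betw p {..<card V} V"
    and "\<And>a b. a < card V \<Longrightarrow> b < card V \<Longrightarrow>
           R (p a) (p b) \<longleftrightarrow> b = Suc a \<or> (cyc \<and> a = card V - 1 \<and> b = 0)"
    and "cyc \<Longrightarrow> 2 \<le> card V"
proof -
  \<comment> \<open>Grow a maximal walk from a source if there is one; otherwise every vertex has an
    outgoing arc, and the arc leaving the last vertex of the walk closes it into a cycle.\<close>
  obtain s where "s \<in> V" and source_or_total: "(\<forall>x. \<not> R x s) \<or> (\<forall>x\<in>V. \<exists>y. R x y)"
    using exists_source_or_total[OF \<open>V \<noteq> {}\<close>] .
  then have "walk 1 (\<lambda>_. s)" by (simp add: walk_def lessThan_Suc)
  then obtain n p where walk: "walk n p" and "p 0 = s"
    and maximal: "\<And>y. R (p (n - 1)) y \<Longrightarrow> y \<in> p ` {..<n}"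
    using walk_extend_maximal by blast
  have "1 \<le> n" and inj: "inj_on p {..<n}" using walk unfolding walk_def by auto
  note source_or_total' = source_or_total[folded \<open>p 0 = s\<close>]
  note into_start = maximal_walk_arc_into_start[OF walk maximal source_or_total', unfolded \<open>p 0 = s\<close>]
  have "p ` {..<n} = V" using maximal_walk_spans[OF walk maximal source_or_total' connected] .
  moreover have "card (p ` {..<n}) = n" using inj by (simp add: card_image)
  ultimately have "n = card V" by simp
  show thesis
  proof (rule that[of p "\<exists>z. R z s"])
    show "bij_betw p {..<card V} V"
      using inj \<open>p ` {..<n} = V\<close> \<open>n = card V\<close> by (simp add: bij_betw_def)
  next
    fix a b assume "a < card V" "b < card V"
    show "R (p a) (p b) \<longleftrightarrow> b = Suc a \<or> ((\<exists>z. R z s) \<and> a = card V - 1 \<and> b = 0)"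
    proof (cases "b = 0")
      case True
      have "R (p a) (p b) \<longleftrightarrow> (\<exists>z. R z s) \<and> p a = p (n - 1)"
        using into_start[of "p a"] True \<open>p 0 = s\<close> by simp
      also have "\<dots> \<longleftrightarrow> (\<exists>z. R z s) \<and> a = n - 1"
        using inj \<open>a < card V\<close> \<open>n = card V\<close> \<open>1 \<le> n\<close> by (auto dest: inj_onD)
      finally show ?thesis using True \<open>n = card V\<close> by simp
    next
      case False
      then show ?thesis
        using walk_arc_iff[OF walk] \<open>a < card V\<close> \<open>b < card V\<close> \<open>n = card V\<close> by simp
    qed
  next
    assume "\<exists>z. R z s"
    show "2 \<le> card V"
    proof (rule ccontr)
      assume "\<not> 2 \<le> card V"
      then have "n = 1" using \<open>1 \<le> n\<close> \<open>n = card V\<close> by simp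
      then show False using into_start[of s] \<open>\<exists>z. R z s\<close> irreflexive[of s] \<open>p 0 = s\<close> by simp
    qed
  qed
qed

end

lemma admissibleD:
  assumes "admissible r N A"
  shows admissible_diag: "i \<in> {1..r} \<Longrightarrow> A i i = 1"
    and admissible_off_diag: "i \<in> {1..r} \<Longrightarrow> j \<in> {1..r} \<Longrightarrow> i \<noteq> j \<Longrightarrow> A i j = 0 \<or> A i j = -1"
    and admissible_sum: "i \<in> {1..r} \<Longrightarrow> j \<in> {1..r} \<Longrightarrow> A i j + A j i = N j i"
    and admissible_row_unique:
      "i \<in> {1..r} \<Longrightarrow> j \<in> {1..r} \<Longrightarrow> k \<in> {1..r} \<Longrightarrow> A i j = -1 \<Longrightarrow> A i k = -1 \<Longrightarrow> k = j"
    and admissible_col_unique: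
      "i \<in> {1..r} \<Longrightarrow> j \<in> {1..r} \<Longrightarrow> k \<in> {1..r} \<Longrightarrow> A i j = -1 \<Longrightarrow> A k j = -1 \<Longrightarrow> k = i"
  using assms unfolding admissible_def by blast+

lemma admissible_off_diag_eq:
  assumes "admissible r N A" "i \<in> {1..r}" "j \<in> {1..r}" "i \<noteq> j"
  shows "N i j = - of_bool (A i j = -1) - of_bool (A j i = -1)"
  using admissible_sum[OF assms(1,3,2)] admissible_off_diag[OF assms]
    admissible_off_diag[OF assms(1,3,2)] assms(4) by auto

lemma admissible_arcs_partial_injection:
  assumes "admissible r N A"
  shows "partial_injection {1..r} (\<lambda>i j. i \<in> {1..r} \<and> j \<in> {1..r} \<and> i \<noteq> j \<and> A i j = -1)"
proof
  show "finite {1..r}" by simp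
qed (use admissible_row_unique[OF assms] admissible_col_unique[OF assms] in blast)+

lemma indecomposable_connected:
  assumes "indecomposable r N"
    and arcs: "\<And>i j. i \<in> {1..r} \<Longrightarrow> j \<in> {1..r} \<Longrightarrow> i \<noteq> j \<Longrightarrow> N i j \<noteq> 0 \<Longrightarrow> R i j \<or> R j i"
    and P: "P \<subseteq> {1..r}" "P \<noteq> {}" "\<forall>i\<in>P. \<forall>j. R i j \<or> R j i \<longrightarrow> j \<in> P"
  shows "P = {1..r}"
proof (rule ccontr)
  assume "P \<noteq> {1..r}"
  have "\<forall>i\<in>P. \<forall>j\<in>{1..r} - P. N i j = 0"
    using arcs P by blast
  moreover have "{1..r} - P \<noteq> {}" using P(1) \<open>P \<noteq> {1..r}\<close> by blast
  ultimately have "\<exists>I J. I \<noteq> {} \<and> J \<noteq> {} \<and> I \<inter> J = {} \<and> I \<union> J = {1..r} \<and> (\<forall>i\<in>I. \<forall>j\<in>J. N i j = 0)"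
    using P(1,2) by (intro exI[of _ P] exI[of _ "{1..r} - P"]) auto
  then show False
    using assms(1) unfolding indecomposable_def by blast
qed

definition transpose_matrix :: "('a \<Rightarrow> 'a \<Rightarrow> 'b) \<Rightarrow> 'a \<Rightarrow> 'a \<Rightarrow> 'b" where
  "transpose_matrix A i j = A j i"

lemma transpose_matrix_transpose_matrix [simp]: "transpose_matrix (transpose_matrix A) = A"
  by (simp add: transpose_matrix_def fun_eq_iff)

lemma admissible_transpose_matrix:
  assumes "admissible r N A"
  shows "admissible r (transpose_matrix N) (transpose_matrix A)"
  unfolding admissible_def transpose_matrix_def
proof (intro conjI ballI impI)
  note adm = admissibleD[OF assms]
  fix i j k assume "i \<in> {1..r}" "j \<in> {1..r}"
  then show "A i i = 1" and "i \<noteq> j \<Longrightarrow> A j i \<in> {0, -1}" and "A j i + A i j = N i j"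
    using adm(1-3) by simp_all
  show "A j i = -1 \<Longrightarrow> k \<in> {1..r} \<Longrightarrow> k \<noteq> j \<Longrightarrow> A k i \<noteq> -1"
    using adm(5) \<open>i \<in> {1..r}\<close> \<open>j \<in> {1..r}\<close> by blast
  show "A j i = -1 \<Longrightarrow> k \<in> {1..r} \<Longrightarrow> k \<noteq> i \<Longrightarrow> A j k \<noteq> -1"
    using adm(4) \<open>i \<in> {1..r}\<close> \<open>j \<in> {1..r}\<close> by blast
qed

lemma transpose_matrix_in_admissible_set:
  "A \<in> admissible_set r N \<Longrightarrow> transpose_matrix A \<in> admissible_set r (transpose_matrix N)"
  using admissible_transpose_matrix unfolding admissible_set_def by (auto simp: transpose_matrix_def)

lemma transpose_cartan_A [simp]: "transpose_matrix (cartan_A r) = cartan_A r"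
  by (auto simp: transpose_matrix_def cartan_A_def fun_eq_iff)

lemma transpose_cartan_A_aff [simp]: "transpose_matrix (cartan_A_aff r) = cartan_A_aff r"
  by (auto simp: transpose_matrix_def cartan_A_aff_def fun_eq_iff)

definition permute_matrix :: "nat \<Rightarrow> (nat \<Rightarrow> nat) \<Rightarrow> (nat \<Rightarrow> nat \<Rightarrow> 'a::zero) \<Rightarrow> nat \<Rightarrow> nat \<Rightarrow> 'a" where
  "permute_matrix r \<sigma> A i j = (if i \<in> {1..r} \<and> j \<in> {1..r} then A (\<sigma> i) (\<sigma> j) else 0)"

lemma admissible_permute_matrix:
  assumes \<sigma>: "bij_betw \<sigma> {1..r} {1..r}" and NM: "\<forall>i\<in>{1..r}. \<forall>j\<in>{1..r}. N i j = M (\<sigma> i) (\<sigma> j)"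
    and "admissible r M A"
  shows "admissible r N (permute_matrix r \<sigma> A)"
proof -
  have range: "\<sigma> i \<in> {1..r}" if "i \<in> {1..r}" for i using \<sigma> that bij_betwE by blast
  have inj: "\<sigma> i = \<sigma> j \<longleftrightarrow> i = j" if "i \<in> {1..r}" "j \<in> {1..r}" for i j
    using \<sigma> that unfolding bij_betw_def by (auto dest: inj_onD)
  have entry: "permute_matrix r \<sigma> A i j = A (\<sigma> i) (\<sigma> j)" if "i \<in> {1..r}" "j \<in> {1..r}" for i j
    using that by (simp add: permute_matrix_def)
  note adm = admissibleD[OF \<open>admissible r M A\<close>]
  show ?thesis
    unfolding admissible_def
  proof (intro conjI ballI impI)
    fix i assume "i \<in> {1..r}"
    then show "permute_matrix r \<sigma> A i i = 1" using adm(1) range entry by simp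
  next
    fix i j assume "i \<in> {1..r}" "j \<in> {1..r}" "i \<noteq> j"
    then show "permute_matrix r \<sigma> A i j \<in> {0, -1}" using adm(2) range entry inj by simp
  next
    fix i j assume "i \<in> {1..r}" "j \<in> {1..r}"
    then show "permute_matrix r \<sigma> A i j + permute_matrix r \<sigma> A j i = N j i"
      using adm(3) range entry NM by simp
  next
    fix i j k assume "i \<in> {1..r}" "j \<in> {1..r}" "permute_matrix r \<sigma> A i j = -1"
      "k \<in> {1..r}" "k \<noteq> j"
    then show "permute_matrix r \<sigma> A i k \<noteq> -1"
      using adm(4)[of "\<sigma> i" "\<sigma> j" "\<sigma> k"] range entry inj by auto
  next
    fix i j k assume "i \<in> {1..r}" "j \<in> {1..r}" "permute_matrix r \<sigma> A i j = -1"
      "k \<in> {1..r}" "k \<noteq> i"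
    then show "permute_matrix r \<sigma> A k j \<noteq> -1"
      using adm(5)[of "\<sigma> i" "\<sigma> j" "\<sigma> k"] range entry inj by auto
  qed
qed

lemma card_admissible_set_eq:
  assumes "is_type r M N"
  shows "card (admissible_set r N) = card (admissible_set r M)"
proof -
  obtain \<sigma> where \<sigma>: "bij_betw \<sigma> {1..r} {1..r}"
    and NM: "\<forall>i\<in>{1..r}. \<forall>j\<in>{1..r}. N i j = M (\<sigma> i) (\<sigma> j)"
    using assms unfolding is_type_def by blast
  define \<tau> where "\<tau> = inv_into {1..r} \<sigma>"
  have \<tau>: "bij_betw \<tau> {1..r} {1..r}" using \<sigma> bij_betw_inv_into unfolding \<tau>_def by blast
  have \<sigma>_\<tau>: "\<sigma> (\<tau> i) = i" and \<tau>_\<sigma>: "\<tau> (\<sigma> i) = i" if "i \<in> {1..r}" for i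
    using \<sigma> that bij_betw_inv_into_right bij_betw_inv_into_left unfolding \<tau>_def by fastforce+
  have range: "\<sigma> i \<in> {1..r}" "\<tau> i \<in> {1..r}" if "i \<in> {1..r}" for i
    using \<sigma> \<tau> that bij_betwE by blast+
  have MN: "\<forall>i\<in>{1..r}. \<forall>j\<in>{1..r}. M i j = N (\<tau> i) (\<tau> j)"
    using NM range \<sigma>_\<tau> by simp
  have "bij_betw (permute_matrix r \<sigma>) (admissible_set r M) (admissible_set r N)"
  proof (rule bij_betw_byWitness[where f' = "permute_matrix r \<tau>"])
    show "\<forall>A\<in>admissible_set r M. permute_matrix r \<tau> (permute_matrix r \<sigma> A) = A"
      unfolding admissible_set_def permute_matrix_def using range \<sigma>_\<tau> by (auto intro!: ext)
    show "\<forall>A\<in>admissible_set r N. permute_matrix r \<sigma> (permute_matrix r \<tau> A) = A"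
      unfolding admissible_set_def permute_matrix_def using range \<tau>_\<sigma> by (auto intro!: ext)
    show "permute_matrix r \<sigma> ` admissible_set r M \<subseteq> admissible_set r N"
      using admissible_permute_matrix[OF \<sigma> NM] unfolding admissible_set_def
      by (auto simp: permute_matrix_def)
    show "permute_matrix r \<tau> ` admissible_set r N \<subseteq> admissible_set r M"
      using admissible_permute_matrix[OF \<tau> MN] unfolding admissible_set_def
      by (auto simp: permute_matrix_def)
  qed
  then show ?thesis by (simp add: bij_betw_same_card)
qed

lemma is_type_of_enumeration:
  assumes p: "bij_betw p {..<r} {1..r}"
    and NM: "\<And>a b. a < r \<Longrightarrow> b < r \<Longrightarrow> N (p a) (p b) = M (Suc a) (Suc b)"
  shows "is_type r M N"
  unfolding is_type_def
proof (intro exI conjI ballI)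
  show "bij_betw (Suc \<circ> inv_into {..<r} p) {1..r} {1..r}"
    using bij_betw_trans[OF bij_betw_inv_into[OF p], of Suc] by (simp add: image_Suc_lessThan)
  have "inv_into {..<r} p k < r" and "p (inv_into {..<r} p k) = k" if "k \<in> {1..r}" for k
    using bij_betwE[OF bij_betw_inv_into[OF p]] bij_betw_inv_into_right[OF p] that by auto
  then show "N i j = M ((Suc \<circ> inv_into {..<r} p) i) ((Suc \<circ> inv_into {..<r} p) j)"
    if "i \<in> {1..r}" "j \<in> {1..r}" for i j
    using NM that by (metis comp_apply)
qed

lemma admissible_imp_type:
  assumes "1 \<le> r" "gcm r N" "indecomposable r N" "admissible r N A"
  shows "is_type r (cartan_A r) N \<or> (2 \<le> r \<and> is_type r (cartan_A_aff r) N)"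
proof -
  define E where "E i j \<longleftrightarrow> i \<in> {1..r} \<and> j \<in> {1..r} \<and> i \<noteq> j \<and> A i j = -1" for i j
  interpret partial_injection "{1..r}" E
    using admissible_arcs_partial_injection[OF assms(4)] unfolding E_def .
  have N_off_diag: "N i j = - of_bool (E i j) - of_bool (E j i)"
    if "i \<in> {1..r}" "j \<in> {1..r}" "i \<noteq> j" for i j
    using admissible_off_diag_eq[OF assms(4) that] that unfolding E_def by auto
  obtain p cyc where p: "bij_betw p {..<r} {1..r}"
    and arcs: "\<And>a b. a < r \<Longrightarrow> b < r \<Longrightarrow> E (p a) (p b) \<longleftrightarrow> b = Suc a \<or> (cyc \<and> a = r - 1 \<and> b = 0)"
    and cyc_length: "cyc \<Longrightarrow> 2 \<le> r"
  proof -
    have nonempty: "{1..r} \<noteq> {}" using assms(1) by simp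
    have irreflexive: "\<not> E i i" for i unfolding E_def by simp
    have connected: "P = {1..r}"
      if "P \<subseteq> {1..r}" "P \<noteq> {}" "\<forall>i\<in>P. \<forall>j. E i j \<or> E j i \<longrightarrow> j \<in> P" for P
      using indecomposable_connected[OF assms(3) _ that] N_off_diag by fastforce
    have card_V: "card {1..r} = r" by simp
    show thesis
      by (rule connected_path_or_cycle[unfolded card_V, OF nonempty irreflexive connected that])
  qed
  have "p a \<noteq> p b" if "a < r" "b < r" "a \<noteq> b" for a b
    using p that unfolding bij_betw_def by (auto dest: inj_onD)
  then have N_enum: "N (p a) (p b) = (if a = b then 2 else
      - of_bool (b = Suc a \<or> (cyc \<and> a = r - 1 \<and> b = 0))
      - of_bool (a = Suc b \<or> (cyc \<and> b = r - 1 \<and> a = 0)))" if "a < r" "b < r" for a b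
    using that N_off_diag arcs bij_betwE[OF p] assms(2) unfolding gcm_def by auto
  show ?thesis
  proof (cases cyc)
    case False
    then have "is_type r (cartan_A r) N"
      by (intro is_type_of_enumeration[OF p]) (auto simp: N_enum cartan_A_def)
    then show ?thesis ..
  next
    case True
    then have "2 \<le> r" by (rule cyc_length)
    moreover have "is_type r (cartan_A_aff r) N"
      using True \<open>2 \<le> r\<close>
      by (intro is_type_of_enumeration[OF p]) (auto simp: N_enum cartan_A_aff_def)
    ultimately show ?thesis by blast
  qed
qed

definition path_matrix :: "nat \<Rightarrow> nat \<Rightarrow> nat \<Rightarrow> int" where
  "path_matrix r i j =
     (if i \<in> {1..r} \<and> j \<in> {1..r} then (if i = j then 1 else if j = Suc i then -1 else 0) else 0)"

definition cycle_matrix :: "nat \<Rightarrow> nat \<Rightarrow> nat \<Rightarrow> int" where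
  "cycle_matrix r i j =
     (if i \<in> {1..r} \<and> j \<in> {1..r}
      then (if i = j then 1 else if j = Suc i \<or> (i = r \<and> j = 1) then -1 else 0) else 0)"

lemma path_matrix_in_admissible_set: "path_matrix r \<in> admissible_set r (cartan_A r)"
  unfolding admissible_set_def admissible_def path_matrix_def cartan_A_def by auto

lemma cycle_matrix_in_admissible_set: "2 \<le> r \<Longrightarrow> cycle_matrix r \<in> admissible_set r (cartan_A_aff r)"
  unfolding admissible_set_def admissible_def cycle_matrix_def cartan_A_aff_def by auto

lemma cycle_matrix_notin_admissible_set:
  assumes "2 \<le> r"
  shows "cycle_matrix r \<notin> admissible_set r (cartan_A r)"
proof
  assume "cycle_matrix r \<in> admissible_set r (cartan_A r)"
  then have "cycle_matrix r r 1 + cycle_matrix r 1 r = cartan_A r 1 r"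
    using assms by (intro admissible_sum[of r]) (auto simp: admissible_set_def)
  then show False using assms by (auto simp: cycle_matrix_def cartan_A_def)
qed

lemma path_matrix_notin_admissible_set:
  assumes "2 \<le> r"
  shows "path_matrix r \<notin> admissible_set r (cartan_A_aff r)"
proof
  assume "path_matrix r \<in> admissible_set r (cartan_A_aff r)"
  then have "path_matrix r r 1 + path_matrix r 1 r = cartan_A_aff r 1 r"
    using assms by (intro admissible_sum[of r]) (auto simp: admissible_set_def)
  then show False using assms by (cases "r = 2") (auto simp: path_matrix_def cartan_A_aff_def)
qed

lemma admissible_chain_step:
  assumes "admissible r N A" "1 \<le> i" "Suc (Suc i) \<le> r"
    and "A i (Suc i) = -1" and "N (Suc (Suc i)) (Suc i) = -1"
  shows "A (Suc i) (Suc (Suc i)) = -1"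
proof -
  have range: "i \<in> {1..r}" "Suc i \<in> {1..r}" "Suc (Suc i) \<in> {1..r}" using assms(2,3) by auto
  have "A (Suc (Suc i)) (Suc i) \<noteq> -1"
    using admissible_col_unique[OF assms(1) range(1,2,3) assms(4)] by auto
  then have "A (Suc (Suc i)) (Suc i) = 0" using admissible_off_diag[OF assms(1) range(3,2)] by simp
  then show ?thesis using admissible_sum[OF assms(1) range(2,3)] assms(5) by simp
qed

lemma admissible_chain:
  assumes "admissible r N A" "A 1 2 = -1" "\<And>i. 2 \<le> i \<Longrightarrow> i < r \<Longrightarrow> N (Suc i) i = -1"
  shows "1 \<le> i \<Longrightarrow> i < r \<Longrightarrow> A i (Suc i) = -1"
proof (induction i rule: nat_induct_at_least)
  case base
  then show ?case using assms(2) by (simp add: numeral_2_eq_2)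
next
  case (Suc i)
  then show ?case using admissible_chain_step[OF assms(1)] assms(3)[of "Suc i"] by simp
qed

lemma admissible_set_chain_cases:
  assumes A: "A \<in> admissible_set r N" and "A 1 2 = -1"
    and "\<And>i. 2 \<le> i \<Longrightarrow> i < r \<Longrightarrow> N (Suc i) i = -1"
  shows "A = path_matrix r \<or> A = cycle_matrix r"
proof -
  have adm: "admissible r N A" and outside: "\<And>i j. i \<notin> {1..r} \<or> j \<notin> {1..r} \<Longrightarrow> A i j = 0"
    using A by (auto simp: admissible_set_def)
  have chain: "\<And>i. 1 \<le> i \<Longrightarrow> i < r \<Longrightarrow> A i (Suc i) = -1"
    using admissible_chain[OF adm assms(2,3)] by blast
  have arc: "A i j = -1 \<longleftrightarrow> j = Suc i \<or> (i = r \<and> j = 1 \<and> A r 1 = -1)"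
    if "i \<in> {1..r}" "j \<in> {1..r}" "i \<noteq> j" for i j
  proof
    assume "A i j = -1"
    show "j = Suc i \<or> (i = r \<and> j = 1 \<and> A r 1 = -1)"
    proof (cases "i < r")
      case True
      then show ?thesis
        using admissible_row_unique[OF adm _ _ that(2) chain \<open>A i j = -1\<close>] that(1) by auto
    next
      case False
      then have "i = r" using that(1) by simp
      have "j = 1"
      proof (rule ccontr)
        assume "j \<noteq> 1"
        then have "1 \<le> j - 1" "j - 1 < r" using that(2) by auto
        then have "A (j - 1) j = -1" using chain[of "j - 1"] \<open>j \<noteq> 1\<close> by simp
        then have "i = j - 1"
          using admissible_col_unique[OF adm _ that(2,1) \<open>A (j - 1) j = -1\<close> \<open>A i j = -1\<close>]
            \<open>1 \<le> j - 1\<close> \<open>j - 1 < r\<close> by simp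
        then show False using \<open>i = r\<close> that(2) by (simp; arith)
      qed
      then show ?thesis using \<open>i = r\<close> \<open>A i j = -1\<close> by simp
    qed
  next
    assume "j = Suc i \<or> (i = r \<and> j = 1 \<and> A r 1 = -1)"
    then show "A i j = -1" using chain that by auto
  qed
  have "A i j = (if A r 1 = -1 then cycle_matrix r i j else path_matrix r i j)" for i j
    using outside[of i j] admissible_diag[OF adm, of i] admissible_off_diag[OF adm, of i j] arc[of i j]
    by (auto simp: cycle_matrix_def path_matrix_def)
  then show ?thesis by (metis ext)
qed

lemma admissible_set_orientation_cases:
  assumes A: "A \<in> admissible_set r N" and "transpose_matrix N = N" and "2 \<le> r" and "N 2 1 \<noteq> 0"
    and chain: "\<And>i. 2 \<le> i \<Longrightarrow> i < r \<Longrightarrow> N (Suc i) i = -1"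
  shows "A \<in> {path_matrix r, cycle_matrix r,
               transpose_matrix (path_matrix r), transpose_matrix (cycle_matrix r)}"
proof -
  have adm: "admissible r N A" using A by (simp add: admissible_set_def)
  have range: "1 \<in> {1..r}" "2 \<in> {1..r}" using \<open>2 \<le> r\<close> by auto
  have "A 1 2 = -1 \<or> A 2 1 = -1"
    using admissible_sum[OF adm range] admissible_off_diag[OF adm range] admissible_off_diag[OF adm range(2,1)]
      \<open>N 2 1 \<noteq> 0\<close> by auto
  then show ?thesis
  proof
    assume "A 1 2 = -1"
    then show ?thesis using admissible_set_chain_cases[OF A _ chain] by blast
  next
    assume "A 2 1 = -1"
    then have "transpose_matrix A 1 2 = -1" by (simp add: transpose_matrix_def)
    moreover have "transpose_matrix A \<in> admissible_set r N"
      using transpose_matrix_in_admissible_set[OF A] \<open>transpose_matrix N = N\<close> by simp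
    ultimately have "transpose_matrix A = path_matrix r \<or> transpose_matrix A = cycle_matrix r"
      using admissible_set_chain_cases chain by blast
    then show ?thesis by (metis insertCI transpose_matrix_transpose_matrix)
  qed
qed

lemma admissible_set_cartan_A:
  assumes "1 \<le> r"
  shows "admissible_set r (cartan_A r) = {path_matrix r, transpose_matrix (path_matrix r)}"
proof (cases "r = 1")
  case True
  have "A = path_matrix 1" if "A \<in> admissible_set 1 (cartan_A 1)" for A
    using that admissible_diag[of 1 "cartan_A 1" A]
    by (auto simp: admissible_set_def path_matrix_def fun_eq_iff)
  then have "admissible_set 1 (cartan_A 1) = {path_matrix 1}"
    using path_matrix_in_admissible_set by blast
  moreover have "transpose_matrix (path_matrix 1) = path_matrix 1"
    by (auto simp: transpose_matrix_def path_matrix_def fun_eq_iff)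
  ultimately show ?thesis using True by simp
next
  case False
  then have "2 \<le> r" using assms by simp
  have "cartan_A r 2 1 \<noteq> 0" and "\<And>i. 2 \<le> i \<Longrightarrow> i < r \<Longrightarrow> cartan_A r (Suc i) i = -1"
    by (simp_all add: cartan_A_def)
  note cases = admissible_set_orientation_cases[OF _ transpose_cartan_A \<open>2 \<le> r\<close> this]
  have "transpose_matrix (cycle_matrix r) \<notin> admissible_set r (cartan_A r)"
    using transpose_matrix_in_admissible_set cycle_matrix_notin_admissible_set[OF \<open>2 \<le> r\<close>]
    by (metis transpose_cartan_A transpose_matrix_transpose_matrix)
  then have "admissible_set r (cartan_A r) \<subseteq> {path_matrix r, transpose_matrix (path_matrix r)}"
    using cases cycle_matrix_notin_admissible_set[OF \<open>2 \<le> r\<close>] by blast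
  moreover have "transpose_matrix (path_matrix r) \<in> admissible_set r (cartan_A r)"
    using transpose_matrix_in_admissible_set[OF path_matrix_in_admissible_set] by simp
  ultimately show ?thesis using path_matrix_in_admissible_set by blast
qed

lemma admissible_set_cartan_A_aff:
  assumes "2 \<le> r"
  shows "admissible_set r (cartan_A_aff r) = {cycle_matrix r, transpose_matrix (cycle_matrix r)}"
proof -
  have "cartan_A_aff r 2 1 \<noteq> 0" and "\<And>i. 2 \<le> i \<Longrightarrow> i < r \<Longrightarrow> cartan_A_aff r (Suc i) i = -1"
    by (simp_all add: cartan_A_aff_def)
  note cases = admissible_set_orientation_cases[OF _ transpose_cartan_A_aff assms this]
  have "transpose_matrix (path_matrix r) \<notin> admissible_set r (cartan_A_aff r)"
    using transpose_matrix_in_admissible_set path_matrix_notin_admissible_set[OF assms]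
    by (metis transpose_cartan_A_aff transpose_matrix_transpose_matrix)
  then have "admissible_set r (cartan_A_aff r) \<subseteq> {cycle_matrix r, transpose_matrix (cycle_matrix r)}"
    using cases path_matrix_notin_admissible_set[OF assms] by blast
  moreover have "transpose_matrix (cycle_matrix r) \<in> admissible_set r (cartan_A_aff r)"
    using transpose_matrix_in_admissible_set[OF cycle_matrix_in_admissible_set[OF assms]] by simp
  ultimately show ?thesis using cycle_matrix_in_admissible_set[OF assms] by blast
qed

lemma transpose_path_matrix_eq_iff:
  assumes "1 \<le> r"
  shows "path_matrix r = transpose_matrix (path_matrix r) \<longleftrightarrow> r = 1"
proof
  assume "path_matrix r = transpose_matrix (path_matrix r)"
  then have "path_matrix r 2 1 = path_matrix r 1 2" by (metis transpose_matrix_def)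
  then show "r = 1" using assms by (simp add: path_matrix_def split: if_splits)
qed (auto simp: transpose_matrix_def path_matrix_def fun_eq_iff)

lemma transpose_cycle_matrix_eq_iff:
  assumes "2 \<le> r"
  shows "cycle_matrix r = transpose_matrix (cycle_matrix r) \<longleftrightarrow> r = 2"
proof
  assume "cycle_matrix r = transpose_matrix (cycle_matrix r)"
  then have "cycle_matrix r 2 1 = cycle_matrix r 1 2" by (metis transpose_matrix_def)
  then show "r = 2" using assms by (simp add: cycle_matrix_def split: if_splits)
qed (auto simp: transpose_matrix_def cycle_matrix_def fun_eq_iff)

lemma card_admissible_set_cartan_A:
  assumes "1 \<le> r"
  shows "card (admissible_set r (cartan_A r)) = (if r = 1 then 1 else 2)"
proof -
  have "card {path_matrix r, transpose_matrix (path_matrix r)} =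
    (if path_matrix r = transpose_matrix (path_matrix r) then 1 else 2)" by simp
  then show ?thesis
    using admissible_set_cartan_A[OF assms] transpose_path_matrix_eq_iff[OF assms] by simp
qed

lemma card_admissible_set_cartan_A_aff:
  assumes "2 \<le> r"
  shows "card (admissible_set r (cartan_A_aff r)) = (if r = 2 then 1 else 2)"
proof -
  have "card {cycle_matrix r, transpose_matrix (cycle_matrix r)} =
    (if cycle_matrix r = transpose_matrix (cycle_matrix r) then 1 else 2)" by simp
  then show ?thesis
    using admissible_set_cartan_A_aff[OF assms] transpose_cycle_matrix_eq_iff[OF assms] by simp
qed

theorem lemma3p8:
  fixes r :: nat and N :: "nat \<Rightarrow> nat \<Rightarrow> int"
  assumes "r \<ge> 1" and "gcm r N" and "indecomposable r N"
  shows "((\<exists>A. admissible r N A) \<longleftrightarrow>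
            (is_type r (cartan_A r) N \<or> (r \<ge> 2 \<and> is_type r (cartan_A_aff r) N)))
       \<and> ((r = 1 \<and> is_type r (cartan_A r) N) \<or> (r = 2 \<and> is_type r (cartan_A_aff r) N)
            \<longrightarrow> card (admissible_set r N) = 1)
       \<and> ((r \<ge> 2 \<and> is_type r (cartan_A r) N) \<or> (r \<ge> 3 \<and> is_type r (cartan_A_aff r) N)
            \<longrightarrow> card (admissible_set r N) = 2)"
proof -
  have card_A: "card (admissible_set r N) = (if r = 1 then 1 else 2)" if "is_type r (cartan_A r) N"
    using card_admissible_set_eq[OF that] card_admissible_set_cartan_A[OF assms(1)] by simp
  have card_A_aff: "card (admissible_set r N) = (if r = 2 then 1 else 2)"
    if "2 \<le> r" "is_type r (cartan_A_aff r) N"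
    using card_admissible_set_eq[OF that(2)] card_admissible_set_cartan_A_aff[OF that(1)] by simp
  have exists: "\<exists>A. admissible r N A" if "card (admissible_set r N) \<noteq> 0"
    using that unfolding admissible_set_def by (metis (no_types, lifting) card.empty empty_Collect_eq)
  show ?thesis
    using admissible_imp_type[OF assms] card_A card_A_aff exists by auto
qed

end
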